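(* Let $C_1,C_2\subseteq\mathbb{F}_q^n$ be linear codes such that $(C_1,C_2)$ is $\rho$-product-expanding, and let $C_1'\subseteq C_1$ be a linear subcode of codimension 1. Then $(C_1',C_2)$ is $\rho^2/2$-product-expanding.
   Context: A pair of linear codes $C_1,C_2\subseteq\mathbb{F}_q^n$ is $\rho$-product-expanding if every $x\in C_1\otimes\mathbb{F}_q^n+\mathbb{F}_q^n\otimes C_2$ (an $n\times n$ matrix) can be written as $x=c+r$ with $c\in C_1\otimes\mathbb{F}_q^n$ (all columns in $C_1$) and $r\in\mathbb{F}_q^n\otimes C_2$ (all rows in $C_2$) such that $|x|\ge\rho n(|c|_{\mathrm{col}}+|r|_{\mathrm{row}})$, where $|x|$ is the number of nonzero entries, $|c|_{\mathrm{col}}$ the number of nonzero columns of $c$, and $|r|_{\mathrm{row}}$ the number of nonzero rows of $r$. *)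

theory Defs
  imports "HOL-Analysis.Analysis"
begin

text \<open>Vectors in F_q^n are elements of 'a ^ 'n (index type 'n with CARD('n) = n);
  an n x n matrix x is an element of 'a ^ 'n ^ 'n with entry x $ i $ j in row i, column j.
  A linear code is a subspace (vec.subspace) of 'a ^ 'n.\<close>

definition col :: "'a ^ 'n ^ 'm \<Rightarrow> 'n \<Rightarrow> 'a ^ 'm" where
  "col x j = (\<chi> i. x $ i $ j)"

definition col_code :: "('a ^ 'n) set \<Rightarrow> ('a ^ 'n ^ 'n) set" where
  "col_code C = {x. \<forall>j. col x j \<in> C}"

definition row_code :: "('a ^ 'n) set \<Rightarrow> ('a ^ 'n ^ 'n) set" where
  "row_code C = {x. \<forall>i. x $ i \<in> C}"

definition hweight :: "'a::zero ^ 'n ^ 'n \<Rightarrow> nat" where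
  "hweight x = card {(i, j). x $ i $ j \<noteq> 0}"

definition col_weight :: "'a::zero ^ 'n ^ 'n \<Rightarrow> nat" where
  "col_weight x = card {j. \<exists>i. x $ i $ j \<noteq> 0}"

definition row_weight :: "'a::zero ^ 'n ^ 'n \<Rightarrow> nat" where
  "row_weight x = card {i. x $ i \<noteq> 0}"

definition product_expanding ::
    "real \<Rightarrow> ('a::field ^ 'n::finite) set \<Rightarrow> ('a ^ 'n) set \<Rightarrow> bool" where
  "product_expanding \<rho> C1 C2 \<longleftrightarrow>
     (\<forall>x \<in> {c + r | c r. c \<in> col_code C1 \<and> r \<in> row_code C2}.
        \<exists>c r. c \<in> col_code C1 \<and> r \<in> row_code C2 \<and> x = c + r \<and>
          real (hweight x) \<ge> \<rho> * real CARD('n) * real (col_weight c + row_weight r))"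

end

theory Submission
  imports Defs
begin

text \<open>Since \<open>C1'\<close> has codimension one in \<open>C1\<close>, there are a vector \<open>u\<close> and a functional \<open>a\<close>
  vanishing on \<open>C1'\<close> with \<open>v - a(v) u \<in> C1'\<close> for all \<open>v \<in> C1\<close>. Take the \<open>\<rho>\<close>-expanding
  decomposition \<open>x = c + r\<close> with respect to \<open>(C1, C2)\<close> and apply \<open>a\<close> to every column of \<open>c\<close>,
  giving a row vector \<open>w\<close>. As \<open>x\<close> also splits as \<open>c' + r'\<close> with the columns of \<open>c'\<close> in \<open>C1'\<close>,
  \<open>w = a(r' - r) \<in> C2\<close>. Moving the rank-one matrix \<open>u w\<^sup>T\<close> from \<open>c\<close> to \<open>r\<close> gives a
  decomposition with respect to \<open>(C1', C2)\<close> with no more nonzero columns and, if \<open>w \<noteq> 0\<close>, at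
  most \<open>n\<close> more nonzero rows. In that case \<open>w\<close> is a nonzero codeword of \<open>C2\<close>, hence of weight at
  least \<open>\<rho> n\<close> (expand the matrix whose only nonzero row is \<open>w\<close>), and it is supported on the
  nonzero columns of \<open>c\<close>; so \<open>|x| \<ge> \<rho> n |c|\<^sub>c\<^sub>o\<^sub>l \<ge> (\<rho> n)\<^sup>2\<close>, which pays for the extra rows
  at the cost of a factor \<open>\<rho>/2\<close>.\<close>

definition vec_support :: "'a::zero ^ 'n \<Rightarrow> 'n set" where
  "vec_support v = {i. v $ i \<noteq> 0}"

definition outer :: "'a::times ^ 'n \<Rightarrow> 'a ^ 'm \<Rightarrow> 'a ^ 'm ^ 'n" where
  "outer u w = (\<chi> i. u $ i *s w)"

lemma outer_component [simp]: "outer u w $ i $ j = u $ i * w $ j"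
  by (simp add: outer_def)

lemma outer_zero_right [simp]: "outer u 0 = (0 :: 'a::mult_zero ^ 'm ^ 'n)"
  by (simp add: vec_eq_iff)

lemma hweight_outer:
  fixes u w :: "'a::semiring_no_zero_divisors ^ 'n::finite"
  shows "hweight (outer u w) = card (vec_support u) * card (vec_support w)"
proof -
  have "{(i, j). outer u w $ i $ j \<noteq> 0} = vec_support u \<times> vec_support w"
    by (auto simp: vec_support_def)
  then show ?thesis
    by (simp add: hweight_def card_cartesian_product)
qed

lemma col_weight_eq_0_iff: "col_weight c = 0 \<longleftrightarrow> c = (0 :: 'a::zero ^ 'n::finite ^ 'n)"
  by (auto simp: col_weight_def vec_eq_iff)

lemma row_weight_eq_0_iff: "row_weight r = 0 \<longleftrightarrow> r = (0 :: 'a::zero ^ 'n::finite ^ 'n)"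
  by (auto simp: row_weight_def vec_eq_iff)

lemma row_weight_le_card: "row_weight (r :: 'a::zero ^ 'n::finite ^ 'n) \<le> CARD('n)"
  unfolding row_weight_def by (rule card_mono) auto

lemma row_weight_add_le:
  fixes r s :: "'a::monoid_add ^ 'n::finite ^ 'n"
  shows "row_weight (r + s) \<le> row_weight r + row_weight s"
proof -
  have "{i. (r + s) $ i \<noteq> 0} \<subseteq> {i. r $ i \<noteq> 0} \<union> {i. s $ i \<noteq> 0}"
    by auto
  then have "row_weight (r + s) \<le> card ({i. r $ i \<noteq> 0} \<union> {i. s $ i \<noteq> 0})"
    unfolding row_weight_def by (intro card_mono) auto
  also have "\<dots> \<le> row_weight r + row_weight s"
    unfolding row_weight_def by (rule card_Un_le)
  finally show ?thesis .
qed

lemma card_vec_support_le_col_weight: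
  fixes c :: "'a::zero ^ 'n::finite ^ 'n"
  assumes "\<And>j. w $ j \<noteq> 0 \<Longrightarrow> \<exists>i. c $ i $ j \<noteq> 0"
  shows "card (vec_support (w :: 'b::zero ^ 'n)) \<le> col_weight c"
  unfolding col_weight_def vec_support_def using assms by (intro card_mono) auto

lemma col_weight_diff_outer_le:
  fixes c :: "'a::ring ^ 'n::finite ^ 'n"
  assumes "\<And>j. w $ j \<noteq> 0 \<Longrightarrow> \<exists>i. c $ i $ j \<noteq> 0"
  shows "col_weight (c - outer u w) \<le> col_weight c"
  unfolding col_weight_def using assms by (intro card_mono) force+

lemma hweight_le_weights:
  fixes c r :: "'a::monoid_add ^ 'n::finite ^ 'n"
  shows "hweight (c + r) \<le> CARD('n) * (col_weight c + row_weight r)"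
proof -
  let ?cols = "{j. \<exists>i. c $ i $ j \<noteq> 0}" and ?rows = "{i. r $ i \<noteq> 0}"
  have "{(i, j). (c + r) $ i $ j \<noteq> 0} \<subseteq> UNIV \<times> ?cols \<union> ?rows \<times> UNIV"
    by (auto simp: vec_eq_iff)
  then have "hweight (c + r) \<le> card (UNIV \<times> ?cols \<union> ?rows \<times> (UNIV :: 'n set))"
    unfolding hweight_def by (intro card_mono) auto
  also have "\<dots> \<le> card ((UNIV :: 'n set) \<times> ?cols) + card (?rows \<times> (UNIV :: 'n set))"
    by (rule card_Un_le)
  also have "\<dots> = CARD('n) * (col_weight c + row_weight r)"
    by (simp add: card_cartesian_product col_weight_def row_weight_def algebra_simps)
  finally show ?thesis .
qed

lemma vector_matrix_mult_component: "(a v* m) $ j = scalar_product a (col m j)"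
  by (simp add: vector_matrix_mult_def scalar_product_def col_def)

lemma vector_matrix_mult_col_code:
  assumes "\<forall>v\<in>C. scalar_product a v = 0" "m \<in> col_code C"
  shows "a v* m = 0"
  using assms by (simp add: vec_eq_iff vector_matrix_mult_component col_code_def)

lemma vector_matrix_mult_nonzero_column:
  assumes "(a v* c) $ j \<noteq> 0"
  shows "\<exists>i. c $ i $ j \<noteq> 0"
  using assms by (rule contrapos_np) (simp add: vector_matrix_mult_def)

lemma vector_matrix_mult_row_code:
  fixes C :: "('a::field ^ 'n::finite) set"
  assumes "vec.subspace C" "m \<in> row_code C"
  shows "a v* m \<in> C"
proof -
  have "a v* m = (\<Sum>i\<in>UNIV. a $ i *s m $ i)"
    by (simp add: vec_eq_iff vector_matrix_mult_def sum_component)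
  also have "\<dots> \<in> C"
    using assms by (intro vec.subspace_sum vec.subspace_scale) (auto simp: row_code_def)
  finally show ?thesis .
qed

lemma row_code_add:
  assumes "vec.subspace C" "r \<in> row_code C" "s \<in> row_code C"
  shows "r + s \<in> row_code C"
  using assms by (simp add: row_code_def vec.subspace_add)

lemma row_code_diff:
  assumes "vec.subspace C" "r \<in> row_code C" "s \<in> row_code C"
  shows "r - s \<in> row_code C"
  using assms by (simp add: row_code_def vec.subspace_diff)

lemma outer_row_code:
  fixes C :: "('a::field ^ 'n::finite) set"
  assumes "vec.subspace C" "w \<in> C"
  shows "outer u w \<in> row_code C"
  using assms by (simp add: row_code_def outer_def vec.subspace_scale)

lemma exists_functional_separating:
  fixes C :: "('a::field ^ 'n::finite) set"
  assumes "vec.subspace C" "u \<notin> C"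
  obtains a where "\<forall>v\<in>C. scalar_product a v = 0" "scalar_product a u = 1"
proof -
  obtain B where B: "B \<subseteq> C" "vec.independent B" "C \<subseteq> vec.span B"
    by (rule vec.basis_exists)
  have span_B: "vec.span B = C"
    using vec.span_minimal[OF B(1) assms(1)] B(3) by blast
  have independent: "vec.independent (insert u B)"
    using B(2) assms(2) unfolding span_B[symmetric] by (rule vec.independent_insertI[rotated])
  fix k :: 'n
  \<comment> \<open>the functional is the \<open>k\<close>-th coordinate of a linear map sending \<open>u\<close> to \<open>axis k 1\<close>\<close>
  obtain g where g: "Vector_Spaces.linear (*s) (*s) g"
    "\<forall>x\<in>insert u B. g x = (if x = u then axis k 1 else (0 :: 'a ^ 'n))"
    using vec.linear_independent_extend[OF independent,
        of "\<lambda>x. if x = u then axis k 1 else 0"] by blast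
  have "\<forall>x\<in>B. g x = 0"
    using g(2) B(1) assms(2) by auto
  then have g_C: "g v = 0" if "v \<in> C" for v
    using vec.linear_eq_0_on_span[OF g(1)] that span_B by blast
  have coordinate: "scalar_product (matrix g $ k) v = g v $ k" for v
    using matrix_works[OF g(1), of v]
    by (simp add: scalar_product_def matrix_vector_mult_def vec_eq_iff)
  show thesis
  proof (rule that)
    show "\<forall>v\<in>C. scalar_product (matrix g $ k) v = 0"
      using g_C by (simp add: coordinate)
    show "scalar_product (matrix g $ k) u = 1"
      using g(2) by (simp add: coordinate)
  qed
qed

lemma codim_one_subspace_projection:
  fixes C C' :: "('a::field ^ 'n::finite) set"
  assumes "vec.subspace C" "vec.subspace C'" "C' \<subseteq> C" "vec.dim C' + 1 = vec.dim C"
  obtains u a where "\<forall>v\<in>C'. scalar_product a v = 0" "\<forall>v\<in>C. v - scalar_product a v *s u \<in> C'"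
proof -
  have "C' \<noteq> C"
    using assms(4) by auto
  then obtain u where u: "u \<in> C" "u \<notin> C'"
    using assms(3) by blast
  obtain a where a: "\<forall>v\<in>C'. scalar_product a v = 0" "scalar_product a u = 1"
    using exists_functional_separating[OF assms(2) u(2)] by blast
  have span_C': "vec.span C' = C'"
    using assms(2) by simp
  have "vec.dim (vec.span (insert u C')) = vec.dim C"
    using assms(4) u(2) by (simp add: vec.dim_insert span_C')
  moreover have "vec.span (insert u C') \<subseteq> C"
    using u(1) assms(1,3) by (intro vec.span_minimal) auto
  ultimately have span_insert: "vec.span (insert u C') = C"
    by (intro vec.subspace_dim_equal[OF vec.subspace_span assms(1)]) simp_all
  have projection: "\<forall>v\<in>C. v - scalar_product a v *s u \<in> C'"
  proof
    fix v assume "v \<in> C"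
    obtain k where k: "v - k *s u \<in> C'"
      using \<open>v \<in> C\<close> unfolding span_insert[symmetric] vec.span_insert span_C' by blast
    have "scalar_product a (v - k *s u) = scalar_product a v - k * scalar_product a u"
      by (simp add: scalar_product_def right_diff_distrib sum_subtractf sum_distrib_left
          mult.left_commute)
    then have "scalar_product a (v - k *s u) = scalar_product a v - k"
      using a(2) by simp
    moreover have "scalar_product a (v - k *s u) = 0"
      using k a(1) by blast
    ultimately show "v - scalar_product a v *s u \<in> C'"
      using k by simp
  qed
  from a(1) projection show thesis
    by (rule that)
qed

lemma product_expanding_min_weight:
  fixes C1 C2 :: "('a::field ^ 'n::finite) set"
  assumes "product_expanding \<rho> C1 C2" "vec.subspace C1" "vec.subspace C2"
    and "w \<in> C2" "w \<noteq> 0"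
  shows "\<rho> * real CARD('n) \<le> real (card (vec_support w))"
proof -
  fix i0 :: 'n
  let ?R = "outer (axis i0 1) w"
  have "0 \<in> col_code C1"
    using assms(2) by (simp add: col_code_def col_def vec.subspace_0 zero_vec_def[symmetric])
  moreover have "?R \<in> row_code C2"
    using assms(3,4) by (rule outer_row_code)
  ultimately have "?R \<in> {c + r |c r. c \<in> col_code C1 \<and> r \<in> row_code C2}"
    by force
  with assms(1) obtain c r where "?R = c + r"
    and bound: "\<rho> * real CARD('n) * real (col_weight c + row_weight r) \<le> real (hweight ?R)"
    unfolding product_expanding_def by blast
  have "?R \<noteq> 0"
    using assms(5) by (auto simp: vec_eq_iff axis_def)
  with \<open>?R = c + r\<close> have "c \<noteq> 0 \<or> r \<noteq> 0"
    by auto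
  then have "col_weight c \<noteq> 0 \<or> row_weight r \<noteq> 0"
    by (simp add: col_weight_eq_0_iff row_weight_eq_0_iff)
  then have nonzero_weight: "1 \<le> col_weight c + row_weight r"
    by presburger
  have hweight_R: "hweight ?R = card (vec_support w)"
    by (simp add: hweight_outer vec_support_def axis_def)
  show ?thesis
  proof (cases "0 \<le> \<rho>")
    case True
    then have "\<rho> * real CARD('n) * 1 \<le> \<rho> * real CARD('n) * real (col_weight c + row_weight r)"
      using nonzero_weight by (intro mult_left_mono) auto
    with bound hweight_R show ?thesis
      by simp
  next
    case False
    then have "\<rho> * real CARD('n) \<le> 0"
      by (simp add: mult_nonpos_nonneg)
    then show ?thesis
      using of_nat_0_le_iff[of "card (vec_support w)"] by linarith
  qed
qed

lemma squared_expansion_bound: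
  fixes \<rho> N S S' h :: real
  assumes "0 < \<rho>" "0 < N" "0 \<le> S" "\<rho> * N * S \<le> h" "h \<le> N * S"
    and "S' \<le> S + N" "S' \<le> S \<or> \<rho> * N \<le> S"
  shows "\<rho>\<^sup>2 / 2 * N * S' \<le> h"
proof -
  have \<rho>NS: "0 \<le> \<rho> * N * S"
    using assms(1-3) by simp
  have \<rho>_le_1: "\<rho> \<le> 1" if "0 < S"
  proof -
    have "\<rho> * (N * S) \<le> 1 * (N * S)"
      using assms(4,5) by (simp add: mult.assoc)
    moreover have "0 < N * S"
      using assms(2) that by simp
    ultimately show ?thesis
      by (simp only: mult_le_cancel_right_pos)
  qed
  have half_\<rho>: "\<rho> / 2 * (\<rho> * N * S) \<le> \<rho> * N * S / 2"
  proof (cases "S = 0")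
    case False
    then have "\<rho> \<le> 1"
      using \<rho>_le_1 assms(3) by simp
    then have "\<rho> * (\<rho> * N * S) \<le> \<rho> * N * S"
      using \<rho>NS assms(1) by (intro mult_left_le_one_le) auto
    then show ?thesis
      by simp
  qed simp
  show ?thesis
    using assms(7)
  proof
    assume "S' \<le> S"
    then have "\<rho>\<^sup>2 / 2 * N * S' \<le> \<rho> / 2 * (\<rho> * N * S)"
      using assms(1,2) by (simp add: power2_eq_square mult_left_mono)
    then show ?thesis
      using half_\<rho> \<rho>NS assms(4) by linarith
  next
    assume "\<rho> * N \<le> S"
    then have "(\<rho> * N) * (\<rho> * N) \<le> \<rho> * N * S"
      using assms(1,2) by (intro mult_left_mono) auto
    moreover have "\<rho>\<^sup>2 / 2 * N * S' \<le> \<rho> / 2 * (\<rho> * N * S) + (\<rho> * N) * (\<rho> * N) / 2"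
    proof -
      have "\<rho>\<^sup>2 / 2 * N * S' \<le> \<rho>\<^sup>2 / 2 * N * (S + N)"
        using assms(1,2,6) by (intro mult_left_mono) auto
      then show ?thesis
        by (simp add: power2_eq_square algebra_simps)
    qed
    ultimately show ?thesis
      using half_\<rho> assms(4) by linarith
  qed
qed

lemma codim_one_correction:
  fixes C1 C1' C2 :: "('a::field ^ 'n::finite) set"
  assumes "vec.subspace C1" "vec.subspace C1'" "vec.subspace C2"
    and "C1' \<subseteq> C1" "vec.dim C1' + 1 = vec.dim C1"
    and "c \<in> col_code C1" "r \<in> row_code C2"
    and "c' \<in> col_code C1'" "r' \<in> row_code C2" "c + r = c' + r'"
  obtains c2 r2 where "c2 \<in> col_code C1'" "r2 \<in> row_code C2" "c2 + r2 = c + r"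
    "col_weight c2 \<le> col_weight c" "row_weight r2 \<le> row_weight r + CARD('n)"
    "row_weight r2 \<le> row_weight r \<or> (\<exists>w\<in>C2. w \<noteq> 0 \<and> card (vec_support w) \<le> col_weight c)"
proof -
  obtain u a where a: "\<forall>v\<in>C1'. scalar_product a v = 0"
    and projection: "\<forall>v\<in>C1. v - scalar_product a v *s u \<in> C1'"
    using codim_one_subspace_projection[OF assms(1,2,4,5)] .
  define w where "w = a v* c"
  have "c = c' + (r' - r)"
    using assms(10) by (simp add: algebra_simps)
  then have "w = a v* c' + a v* (r' - r)"
    unfolding w_def by (simp only: vector_matrix_mult_add_rdistrib)
  then have "w = a v* (r' - r)"
    using vector_matrix_mult_col_code[OF a assms(8)] by simp
  then have w_C2: "w \<in> C2"
    using assms(3) row_code_diff[OF assms(3,9,7)] by (simp add: vector_matrix_mult_row_code)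
  have supported: "\<exists>i. c $ i $ j \<noteq> 0" if "w $ j \<noteq> 0" for j
    using that unfolding w_def by (rule vector_matrix_mult_nonzero_column)
  show thesis
  proof (rule that)
    show "c - outer u w \<in> col_code C1'"
      unfolding col_code_def
    proof (intro CollectI allI)
      fix j
      have "col (c - outer u w) j = col c j - scalar_product a (col c j) *s u"
        by (simp add: col_def w_def vector_matrix_mult_component vec_eq_iff mult.commute)
      then show "col (c - outer u w) j \<in> C1'"
        using projection assms(6) by (simp add: col_code_def)
    qed
    show "r + outer u w \<in> row_code C2"
      using assms(3,7) w_C2 by (simp add: row_code_add outer_row_code)
    show "c - outer u w + (r + outer u w) = c + r"
      by simp
    show "col_weight (c - outer u w) \<le> col_weight c"
      using supported by (rule col_weight_diff_outer_le)
    show "row_weight (r + outer u w) \<le> row_weight r + CARD('n)"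
      using row_weight_add_le[of r "outer u w"] row_weight_le_card[of "outer u w"] by linarith
    show "row_weight (r + outer u w) \<le> row_weight r \<or>
        (\<exists>w\<in>C2. w \<noteq> 0 \<and> card (vec_support w) \<le> col_weight c)"
    proof (cases "w = 0")
      case False
      then show ?thesis
        using w_C2 card_vec_support_le_col_weight[OF supported] by blast
    qed simp
  qed
qed

theorem lemma5p5:
  fixes C1 C1' C2 :: "('a::{field,finite} ^ 'n::finite) set" and \<rho> :: real
  assumes "0 < \<rho>"
    and "vec.subspace C1" and "vec.subspace C2" and "vec.subspace C1'"
    and "C1' \<subseteq> C1" and "vec.dim C1' + 1 = vec.dim C1"
    and "product_expanding \<rho> C1 C2"
  shows "product_expanding (\<rho>\<^sup>2 / 2) C1' C2"
  unfolding product_expanding_def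
proof
  fix x assume "x \<in> {c + r |c r. c \<in> col_code C1' \<and> r \<in> row_code C2}"
  then obtain c' r' where c'r': "c' \<in> col_code C1'" "r' \<in> row_code C2" "x = c' + r'"
    by blast
  then have "x \<in> {c + r |c r. c \<in> col_code C1 \<and> r \<in> row_code C2}"
    using assms(5) by (auto simp: col_code_def)
  with assms(7) obtain c r where cr: "c \<in> col_code C1" "r \<in> row_code C2" "x = c + r"
    and bound: "\<rho> * real CARD('n) * real (col_weight c + row_weight r) \<le> real (hweight x)"
    unfolding product_expanding_def by blast
  obtain c2 r2 where c2r2: "c2 \<in> col_code C1'" "r2 \<in> row_code C2" "c2 + r2 = x"
    and col2: "col_weight c2 \<le> col_weight c" and row2: "row_weight r2 \<le> row_weight r + CARD('n)"
    and few_rows: "row_weight r2 \<le> row_weight r \<or>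
      (\<exists>w\<in>C2. w \<noteq> 0 \<and> card (vec_support w) \<le> col_weight c)"
    using codim_one_correction[OF assms(2,4,3,5,6) cr(1,2) c'r'(1,2)] cr(3) c'r'(3) by metis
  have "row_weight r2 \<le> row_weight r \<or> \<rho> * real CARD('n) \<le> real (col_weight c)"
    using few_rows product_expanding_min_weight[OF assms(7,2,3)] by force
  moreover have "real (hweight x) \<le> real CARD('n) * real (col_weight c + row_weight r)"
    by (metis cr(3) hweight_le_weights of_nat_le_iff of_nat_mult)
  ultimately have "\<rho>\<^sup>2 / 2 * real CARD('n) * real (col_weight c2 + row_weight r2) \<le> real (hweight x)"
    using col2 row2 assms(1) bound
    by (intro squared_expansion_bound[where S = "real (col_weight c + row_weight r)"]) auto
  with c2r2 show "\<exists>c r. c \<in> col_code C1' \<and> r \<in> row_code C2 \<and> x = c + r \<and>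
      \<rho>\<^sup>2 / 2 * real CARD('n) * real (col_weight c + row_weight r) \<le> real (hweight x)"
    by blast
qed

end
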